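(* Consider a canonical noiseless MMV model $B=AX$ in which $A$ satisfies $0\le\delta^L_{2k-r+1}(A)<1$ and the nonzero rows of $X$ are in general position. Let $I_{k-r}\subset\operatorname{supp}X$ with $|I_{k-r}|=k-r$. Then for any $j\in\{1,\dots,n\}\setminus I_{k-r}$, the following are equivalent: (a) $j\in\operatorname{supp}X$; (b) $\operatorname{rank}[A_{I_{k-r}\cup\{j\}}~B]<k+1$; (c) $\mathbf a_j^{*}P^{\perp}_{R([A_{I_{k-r}}~B])}\mathbf a_j=0$.
   Context: Canonical MMV setting: $m,n,r,k$ are positive integers with $r\le m<n$ and $r\le k$. $A\in\mathbb{R}^{m\times n}$ is the sensing matrix with columns $\mathbf a_1,\dots,\mathbf a_n$; $X\in\mathbb{R}^{n\times r}$ has rows $\mathbf x^1,\dots,\mathbf x^n$, $\operatorname{supp}X=\{i:\mathbf x^i\neq 0\}$ and $|\operatorname{supp}X|=k$; $B=AX\in\mathbb{R}^{m\times r}$ has full column rank $r$. For an index set $I$, $A_I$ is the submatrix of $A$ formed by the columns indexed by $I$, and $[A_I~B]$ denotes horizontal concatenation. $R(M)$ is the column space of $M$, $P_{R(M)}$ the orthogonal projection onto it, and $P^\perp_{R(M)}=\mathrm{Id}-P_{R(M)}$; $^*$ denotes transpose. The lower restricted isometry constant $\delta^L_s(A)$ is the smallest $\delta\ge0$ such that $(1-\delta)\|\mathbf x\|_2^2\le\|A\mathbf x\|_2^2$ for all $\mathbf x$ with at most $s$ nonzero entries. "The nonzero rows of $X$ are in general position" means any $r$ of the $k$ nonzero rows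 of $X$ are linearly independent. *)

theory Defs
  imports "HOL-Analysis.Analysis"
begin

definition row_supp :: "real^'r^'n \<Rightarrow> 'n set" where
  "row_supp X = {i. X $ i \<noteq> 0}"

text \<open>Set of columns of the concatenation [A_J B]; its span is R([A_J B]) and
  its dimension is rank [A_J B] (column rank).\<close>
definition concat_cols :: "real^'n^'m \<Rightarrow> 'n set \<Rightarrow> real^'r^'m \<Rightarrow> (real^'m) set" where
  "concat_cols A J B = (\<lambda>i. column i A) ` J \<union> columns B"

definition rank_concat :: "real^'n^'m \<Rightarrow> 'n set \<Rightarrow> real^'r^'m \<Rightarrow> nat" where
  "rank_concat A J B = dim (concat_cols A J B)"

definition orth_proj :: "(real^'m) set \<Rightarrow> real^'m \<Rightarrow> real^'m" where
  "orth_proj S x = (THE p. p \<in> S \<and> (\<forall>y\<in>S. inner (x - p) y = 0))"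

definition orth_proj_perp :: "(real^'m) set \<Rightarrow> real^'m \<Rightarrow> real^'m" where
  "orth_proj_perp S x = x - orth_proj S x"

definition lower_ric :: "nat \<Rightarrow> real^'n^'m \<Rightarrow> real" where
  "lower_ric s A = Inf {\<delta>. \<delta> \<ge> 0 \<and> (\<forall>x::real^'n. card {i. x $ i \<noteq> 0} \<le> s \<longrightarrow>
        (1 - \<delta>) * (norm x)\<^sup>2 \<le> (norm (A *v x))\<^sup>2)}"

definition rows_general_position :: "real^'r^'n \<Rightarrow> bool" where
  "rows_general_position X \<longleftrightarrow>
     (\<forall>S \<subseteq> row_supp X. card S = CARD('r) \<longrightarrow>
        inj_on (\<lambda>i. X $ i) S \<and> independent ((\<lambda>i. X $ i) ` S))"

end

theory Submission imports Defs begin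

(* Write S = supp X, J = S - I (so |J| = r) and C for the columns of
   [A_I B].  The central fact is a uniqueness statement: if A c + B w = 0 where c is
   supported on a set T disjoint from J with |S \<union> T| <= 2k - r + 1, then c = 0 and
   w = 0.  Indeed x = c + X w is sparse with A x = 0, so x = 0 by the lower RIP; on J
   this says that w is orthogonal to r rows of X in general position, hence w = 0.
   Consequently the columns of [A_T B] are independent and pairwise distinct.
   Applied to T = I this gives dim C = k; applied to T = I \<union> {j} with j \<notin> S it gives
   a_j \<notin> span C.  For j \<in> S, span C is the k-dimensional span of the support
   columns of A, which contains a_j.  Finally rank [A_{I \<union> {j}} B] = dim (C + a_j)
   is k or k + 1 according to whether a_j \<in> span C, and a_j^T P\<^sup>\<perp> a_j = 0 says
   exactly a_j \<in> span C. *)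

section \<open>Orthogonal projection onto a span\<close>

text \<open>The defining property of orth_proj determines it uniquely on spans,
  via the orthogonal decomposition of the space.\<close>
lemma orth_proj_span:
  fixes V :: "(real^'m) set"
  shows "orth_proj (span V) x \<in> span V \<and> (\<forall>y\<in>span V. inner (x - orth_proj (span V) x) y = 0)"
proof -
  obtain p z where p: "p \<in> span V" and z: "\<And>w. w \<in> span V \<Longrightarrow> orthogonal z w"
    and x_eq: "x = p + z"
    using orthogonal_subspace_decomp_exists[of V x] by blast
  have p_proj: "p \<in> span V \<and> (\<forall>y\<in>span V. inner (x - p) y = 0)"
    using p z x_eq by (simp add: orthogonal_def)
  have unique: "q = p" if q: "q \<in> span V \<and> (\<forall>y\<in>span V. inner (x - q) y = 0)" for q
  proof -
    have "p - q \<in> span V" using q p by (simp add: span_diff)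
    then have "inner (x - q) (p - q) = 0" "inner (x - p) (p - q) = 0" using q p_proj by auto
    then have "inner (p - q) (p - q) = 0" by (simp add: inner_diff_left inner_diff_right)
    then show ?thesis by simp
  qed
  have "orth_proj (span V) x = p"
    unfolding orth_proj_def using p_proj unique by (rule the_equality)
  then show ?thesis using p_proj by simp
qed

text \<open>The quadratic form a^T P_perp a equals the squared norm of P_perp a, so it
  vanishes exactly on the subspace: this is the projection test (c) of the theorem.\<close>
lemma inner_orth_proj_perp_eq_0_iff:
  fixes V :: "(real^'m) set"
  shows "inner a (orth_proj_perp (span V) a) = 0 \<longleftrightarrow> a \<in> span V"
proof -
  define p where "p = orth_proj (span V) a"
  have p: "p \<in> span V" "\<forall>y\<in>span V. inner (a - p) y = 0"
    using orth_proj_span[of V a] p_def by auto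
  have "inner a (a - p) = inner (a - p) (a - p)"
    using p by (simp add: inner_diff_left inner_commute)
  then have form_eq_0: "inner a (orth_proj_perp (span V) a) = 0 \<longleftrightarrow> a = p"
    by (simp add: orth_proj_perp_def p_def[symmetric])
  show ?thesis
  proof
    assume "a \<in> span V"
    then have "a - p \<in> span V" using p by (simp add: span_diff)
    then have "a = p" using p by auto
    then show "inner a (orth_proj_perp (span V) a) = 0" using form_eq_0 by simp
  qed (use form_eq_0 p in auto)
qed

section \<open>Sparse kernel and general position\<close>

lemma lower_ric_sparse_kernel:
  fixes A :: "real^'n^'m"
  assumes "lower_ric s A < 1" and "card {i. x $ i \<noteq> 0} \<le> s" and "A *v x = 0"
  shows "x = 0"
proof -
  let ?D = "{\<delta>. \<delta> \<ge> 0 \<and> (\<forall>x::real^'n. card {i. x $ i \<noteq> 0} \<le> s \<longrightarrow>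
        (1 - \<delta>) * (norm x)\<^sup>2 \<le> (norm (A *v x))\<^sup>2)}"
  have "1 \<in> ?D" by auto
  then have "?D \<noteq> {}" by blast
  moreover have "bdd_below ?D" by (rule bdd_belowI[of _ 0]) auto
  ultimately obtain d where "d \<in> ?D" "d < 1"
    using assms(1) cInf_less_iff[of ?D 1] unfolding lower_ric_def by auto
  then have "(1 - d) * (norm x)\<^sup>2 \<le> 0" using assms by auto
  then have "(norm x)\<^sup>2 \<le> 0" using \<open>d < 1\<close> by (simp add: mult_le_0_iff)
  then show ?thesis by simp
qed

lemma general_position_rows_span:
  fixes X :: "real^'r^'n"
  assumes "rows_general_position X" and "J \<subseteq> row_supp X" and "card J = CARD('r)"
  shows "span ((\<lambda>i. X $ i) ` J) = UNIV"
proof -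
  let ?R = "(\<lambda>i. X $ i) ` J"
  have "inj_on (\<lambda>i. X $ i) J" and indep: "independent ?R"
    using assms unfolding rows_general_position_def by auto
  then have "card ?R = CARD('r)" using assms(3) by (simp add: card_image)
  then have "UNIV \<subseteq> span ?R"
    using card_ge_dim_independent[of ?R UNIV] indep by auto
  then show ?thesis by auto
qed

lemma trivial_relation_off_support:
  fixes A :: "real^'n^'m" and X :: "real^'r^'n" and B :: "real^'r^'m"
  assumes B: "B = A ** X" and ric: "lower_ric s A < 1"
    and gp: "rows_general_position X"
    and J: "J \<subseteq> row_supp X" "card J = CARD('r)" "T \<inter> J = {}"
    and small: "card (row_supp X \<union> T) \<le> s"
    and c_supp: "\<forall>i. i \<notin> T \<longrightarrow> c $ i = 0" and rel: "A *v c + B *v w = 0"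
  shows "c = 0 \<and> w = 0"
proof -
  define x where "x = c + X *v w"
  have Xw: "(X *v w) $ i = inner (X $ i) w" for i
    by (simp add: matrix_vector_mult_def inner_vec_def)
  have "A *v x = 0" using rel B
    by (simp add: x_def matrix_vector_right_distrib matrix_vector_mul_assoc)
  moreover have "{i. x $ i \<noteq> 0} \<subseteq> row_supp X \<union> T"
    using c_supp by (auto simp: x_def Xw row_supp_def)
  then have "card {i. x $ i \<noteq> 0} \<le> card (row_supp X \<union> T)"
    by (rule card_mono[rotated]) simp
  then have "card {i. x $ i \<noteq> 0} \<le> s" using small by linarith
  ultimately have x0: "x = 0" by (rule lower_ric_sparse_kernel[OF ric, rotated])
  have "orthogonal w (X $ i)" if "i \<in> J" for i
  proof -
    have "c $ i = 0" using that J(3) c_supp by blast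
    moreover have "x $ i = c $ i + inner (X $ i) w" by (simp add: x_def Xw)
    ultimately have "inner (X $ i) w = 0" using x0 by simp
    then show ?thesis by (simp add: orthogonal_def inner_commute)
  qed
  moreover have "w \<in> span ((\<lambda>i. X $ i) ` J)"
    using general_position_rows_span[OF gp J(1,2)] by simp
  ultimately have "orthogonal w w" by (metis (no_types, lifting) imageE orthogonal_to_span)
  then have w0: "w = 0" by (simp add: orthogonal_def)
  then show ?thesis using x0 by (simp add: x_def)
qed

section \<open>Independence of the columns of [A_T B]\<close>

lemma concat_cols_distinct:
  fixes A :: "real^'n^'m" and B :: "real^'r^'m"
  assumes trivial: "\<And>c w. \<forall>i. i \<notin> T \<longrightarrow> c $ i = 0 \<Longrightarrow> A *v c + B *v w = 0 \<Longrightarrow> c = 0 \<and> w = 0"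
  shows "inj_on (\<lambda>i. column i A) T" and "inj (\<lambda>l. column l B)"
    and "(\<lambda>i. column i A) ` T \<inter> range (\<lambda>l. column l B) = {}"
proof -
  have A_axis: "A *v axis i 1 = column i A" for i by (simp add: matrix_vector_mult_basis)
  have B_axis: "B *v axis l 1 = column l B" for l by (simp add: matrix_vector_mult_basis)
  show "inj_on (\<lambda>i. column i A) T"
  proof (rule inj_onI, rule ccontr)
    fix i i' assume "i \<in> T" "i' \<in> T" "column i A = column i' A" "i \<noteq> i'"
    define c where "c = axis i (1::real) - axis i' 1"
    have "\<forall>t. t \<notin> T \<longrightarrow> c $ t = 0" using \<open>i \<in> T\<close> \<open>i' \<in> T\<close> by (auto simp: c_def axis_def)
    moreover have "A *v c + B *v 0 = 0" using \<open>column i A = column i' A\<close>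
      by (simp add: c_def matrix_vector_mult_diff_distrib A_axis)
    ultimately have "c = 0 \<and> (0::real^'r) = 0" by (rule trivial)
    then have "c $ i = 0" by simp
    then show False using \<open>i \<noteq> i'\<close> by (simp add: c_def axis_def)
  qed
  show "inj (\<lambda>l. column l B)"
  proof (rule injI, rule ccontr)
    fix l l' assume "column l B = column l' B" "l \<noteq> l'"
    define w where "w = axis l (1::real) - axis l' 1"
    have "\<forall>t. t \<notin> T \<longrightarrow> (0::real^'n) $ t = 0" by simp
    moreover have "A *v 0 + B *v w = 0" using \<open>column l B = column l' B\<close>
      by (simp add: w_def matrix_vector_mult_diff_distrib B_axis)
    ultimately have "(0::real^'n) = 0 \<and> w = 0" by (rule trivial)
    then have "w $ l = 0" by simp
    then show False using \<open>l \<noteq> l'\<close> by (simp add: w_def axis_def)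
  qed
  show "(\<lambda>i. column i A) ` T \<inter> range (\<lambda>l. column l B) = {}"
  proof (rule ccontr)
    assume "(\<lambda>i. column i A) ` T \<inter> range (\<lambda>l. column l B) \<noteq> {}"
    then obtain i l where "i \<in> T" "column i A = column l B" by auto
    have "\<forall>t. t \<notin> T \<longrightarrow> axis i (1::real) $ t = 0" using \<open>i \<in> T\<close> by (auto simp: axis_def)
    moreover have "A *v axis i 1 + B *v (- axis l 1) = 0"
      using \<open>column i A = column l B\<close> matrix_vector_mult_diff_distrib[of B 0 "axis l 1"]
      by (simp add: A_axis B_axis)
    ultimately have "axis i (1::real) = 0 \<and> - axis l (1::real) = 0" by (rule trivial)
    then show False by (simp add: axis_eq_0_iff)
  qed
qed

text \<open>Under the same hypothesis the columns of [A_T B] are linearly independent: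
  a vanishing combination of them is a relation A c + B w = 0.\<close>
lemma concat_cols_independent:
  fixes A :: "real^'n^'m" and B :: "real^'r^'m"
  assumes trivial: "\<And>c w. \<forall>i. i \<notin> T \<longrightarrow> c $ i = 0 \<Longrightarrow> A *v c + B *v w = 0 \<Longrightarrow> c = 0 \<and> w = 0"
  shows "independent (concat_cols A T B) \<and> card (concat_cols A T B) = card T + CARD('r)"
proof -
  define f where "f = (\<lambda>i. column i A)"
  define g where "g = (\<lambda>l. column l B)"
  note distinct = concat_cols_distinct[of T A B, OF trivial, folded f_def g_def]
  have cols: "concat_cols A T B = f ` T \<union> range g"
    by (auto simp: concat_cols_def columns_def f_def g_def)
  have "\<not> dependent (f ` T \<union> range g)"
  proof
    assume "dependent (f ` T \<union> range g)"
    then obtain u where u: "\<exists>v\<in>f ` T \<union> range g. u v \<noteq> 0"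
      and zero: "(\<Sum>v\<in>f ` T \<union> range g. u v *\<^sub>R v) = 0"
      using dependent_finite[of "f ` T \<union> range g"] by auto
    define c where "c = (\<chi> i. if i \<in> T then u (f i) else 0)"
    define w where "w = (\<chi> l. u (g l))"
    have "A *v c = (\<Sum>i\<in>UNIV. if i \<in> T then u (f i) *\<^sub>R f i else 0)"
      unfolding matrix_mult_sum c_def f_def scalar_mult_eq_scaleR by (rule sum.cong) auto
    also have "\<dots> = (\<Sum>i\<in>T. u (f i) *\<^sub>R f i)"
      by (simp add: sum.If_cases)
    finally have Ac: "A *v c = (\<Sum>i\<in>T. u (f i) *\<^sub>R f i)" .
    have Bw: "B *v w = (\<Sum>l\<in>UNIV. u (g l) *\<^sub>R g l)"
      by (simp add: matrix_mult_sum w_def g_def scalar_mult_eq_scaleR)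
    have "(\<Sum>v\<in>f ` T \<union> range g. u v *\<^sub>R v) = A *v c + B *v w"
      unfolding Ac Bw using distinct by (simp add: sum.union_disjoint sum.reindex)
    then have rel: "A *v c + B *v w = 0" using zero by simp
    have "\<forall>i. i \<notin> T \<longrightarrow> c $ i = 0" by (simp add: c_def)
    then have "c = 0 \<and> w = 0" using rel by (rule trivial)
    then have c_zero: "c $ i = 0" and w_zero: "w $ l = 0" for i l by simp_all
    have "u (f i) = 0" if "i \<in> T" for i using that c_zero[of i] by (simp add: c_def)
    moreover have "u (g l) = 0" for l using w_zero[of l] by (simp add: w_def)
    ultimately show False using u by auto
  qed
  moreover have "card (f ` T \<union> range g) = card T + CARD('r)"
    using distinct by (simp add: card_Un_disjoint card_image)
  ultimately show ?thesis using cols by simp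
qed

lemma column_in_span_support_columns:
  fixes A :: "real^'n^'m" and X :: "real^'r^'n"
  shows "column l (A ** X) \<in> span ((\<lambda>i. column i A) ` row_supp X)"
proof -
  let ?W = "(\<lambda>i. column i A) ` row_supp X"
  have "column l (A ** X) = (\<Sum>i\<in>UNIV. (X *v axis l 1) $ i *s column i A)"
    by (metis matrix_mult_sum matrix_vector_mul_assoc matrix_vector_mult_basis)
  also have "\<dots> \<in> span ?W"
  proof (rule span_sum)
    fix i
    show "(X *v axis l 1) $ i *s column i A \<in> span ?W"
    proof (cases "i \<in> row_supp X")
      case True
      then show ?thesis unfolding scalar_mult_eq_scaleR by (intro span_mul span_base) simp
    next
      case False
      then have "(X *v axis l 1) $ i = 0" by (simp add: row_supp_def matrix_vector_mult_def)
      then show ?thesis by (simp add: span_zero)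
    qed
  qed
  finally show ?thesis .
qed

text \<open>Specialisation to the setting of the theorem: when I consists of k - r support
  indices, the columns of [A_T B] are independent for every T obtained from I by
  adding at most one index outside the support (the sparsity 2k - r + 1 is what
  this needs).\<close>
lemma concat_cols_independent_near_support:
  fixes A :: "real^'n^'m" and X :: "real^'r^'n" and B :: "real^'r^'m"
  assumes B: "B = A ** X" and ric: "lower_ric (2 * k - CARD('r) + 1) A < 1"
    and gp: "rows_general_position X"
    and card_S: "card (row_supp X) = k" and r_le_k: "CARD('r) \<le> k"
    and I: "I \<subseteq> row_supp X" "card I = k - CARD('r)"
    and T: "I \<subseteq> T" "T \<inter> row_supp X \<subseteq> I" "card T \<le> card I + 1"
  shows "independent (concat_cols A T B) \<and> card (concat_cols A T B) = card T + CARD('r)"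
proof (rule concat_cols_independent)
  let ?J = "row_supp X - I"
  have J: "?J \<subseteq> row_supp X" "card ?J = CARD('r)" "T \<inter> ?J = {}"
    using card_Diff_subset[of I "row_supp X"] I card_S r_le_k T(2)
    by (auto simp: finite_subset)
  have "row_supp X \<union> T = row_supp X \<union> (T - I)" using I(1) by blast
  then have "card (row_supp X \<union> T) \<le> k + card (T - I)"
    using card_Un_le[of "row_supp X" "T - I"] card_S by simp
  moreover have "card (T - I) \<le> 1"
    using card_Diff_subset[of I T] T I(2) by (simp add: finite_subset)
  ultimately have small: "card (row_supp X \<union> T) \<le> 2 * k - CARD('r) + 1"
    using r_le_k by linarith
  fix c w assume "\<forall>i. i \<notin> T \<longrightarrow> c $ i = 0" and "A *v c + B *v w = 0"
  then show "c = 0 \<and> w = 0"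
    by (rule trivial_relation_off_support[OF B ric gp J small])
qed

text \<open>On the support: once the columns of [A_I B] are independent and as many as the
  support of X, they span the same space as the support columns of A (which contains
  all columns of B), so every support column of A lies in their span.\<close>
lemma support_column_in_span:
  fixes A :: "real^'n^'m" and X :: "real^'r^'n" and B :: "real^'r^'m"
  assumes B: "B = A ** X" and I: "I \<subseteq> row_supp X"
    and indep: "independent (concat_cols A I B)"
    and card: "card (row_supp X) \<le> card (concat_cols A I B)"
    and j: "j \<in> row_supp X"
  shows "column j A \<in> span (concat_cols A I B)"
proof -
  define C where "C = concat_cols A I B"
  define W where "W = (\<lambda>i. column i A) ` row_supp X"
  have "column l B \<in> span W" for l
    using column_in_span_support_columns[of l A X] B by (simp add: W_def)
  moreover have "column i A \<in> span W" if "i \<in> I" for i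
    using that I by (auto simp: W_def intro: span_base)
  ultimately have "C \<subseteq> span W" by (auto simp: C_def concat_cols_def columns_def)
  moreover have "dim (span W) \<le> card C"
  proof -
    have "dim W \<le> card W" by (rule dim_le_card') (simp add: W_def)
    also have "\<dots> \<le> card (row_supp X)" unfolding W_def by (rule card_image_le) simp
    finally show ?thesis using card by (simp add: C_def)
  qed
  ultimately have "span W \<subseteq> span C"
    using card_ge_dim_independent[of C "span W"] indep by (simp add: C_def)
  then show ?thesis using j by (auto simp: C_def W_def intro: span_base)
qed

theorem corollary1:
  fixes A :: "real^'n^'m" and X :: "real^'r^'n" and B :: "real^'r^'m"
    and k :: nat and I :: "'n set" and j :: 'n
  assumes "CARD('r) \<le> CARD('m)" and "CARD('m) < CARD('n)" and "CARD('r) \<le> k"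
    and "card (row_supp X) = k"
    and "B = A ** X"
    and "rank B = CARD('r)"
    and "0 \<le> lower_ric (2 * k - CARD('r) + 1) A" and "lower_ric (2 * k - CARD('r) + 1) A < 1"
    and "rows_general_position X"
    and "I \<subseteq> row_supp X" and "card I = k - CARD('r)"
    and "j \<notin> I"
  shows "(j \<in> row_supp X \<longleftrightarrow> rank_concat A (I \<union> {j}) B < k + 1)
       \<and> (rank_concat A (I \<union> {j}) B < k + 1 \<longleftrightarrow>
            inner (column j A) (orth_proj_perp (span (concat_cols A I B)) (column j A)) = 0)"
proof -
  define C where "C = concat_cols A I B"
  define a where "a = column j A"
  note independent_near_support =
    concat_cols_independent_near_support[OF assms(5,8,9,4,3,10,11)]
  have "independent C \<and> card C = k"
    using independent_near_support[of I] assms(3,11) by (simp add: C_def)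
  then have indep_C: "independent C" and card_C: "card C = k" and dim_C: "dim C = k"
    by (auto simp: dim_eq_card_independent)
  have insert_a: "concat_cols A (I \<union> {j}) B = insert a C"
    by (auto simp: C_def a_def concat_cols_def)
  \<comment> \<open>Rank test (b) and projection test (c) both say that a_j lies in span C.\<close>
  have rank_test: "rank_concat A (I \<union> {j}) B < k + 1 \<longleftrightarrow> a \<in> span C"
    unfolding rank_concat_def insert_a by (simp add: dim_insert dim_C)
  \<comment> \<open>Off the support, a_j extends C to an independent set of k + 1 columns.\<close>
  have "a \<notin> span C" if "j \<notin> row_supp X"
  proof -
    have "independent (insert a C) \<and> card (insert a C) = card (I \<union> {j}) + CARD('r)"
      unfolding insert_a[symmetric] using that assms(12)
      by (intro independent_near_support) (auto simp: card_insert_if)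
    then have "dim (insert a C) = k + 1"
      using assms(3,11,12) by (simp add: dim_eq_card_independent card_insert_if)
    then show ?thesis using dim_C by (simp add: dim_insert split: if_splits)
  qed
  moreover have "a \<in> span C" if "j \<in> row_supp X"
    using support_column_in_span[OF assms(5,10)] indep_C card_C assms(4) that
    by (simp add: C_def a_def)
  ultimately show ?thesis
    using rank_test inner_orth_proj_perp_eq_0_iff[of a C] unfolding C_def a_def by blast
qed

end
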